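(* Fix the setup in the context (system data $f,g$, state constraint set $\mathcal X$, gain $\mathbf K$, matrices $Q,P$, constant $\gamma$, disturbance level $\overline w\ge0$). There exist constants $\underline\alpha,\underline\beta\ge0$ such that the following holds. For all $\alpha\ge\underline\alpha$, $\beta\ge\underline\beta$, all $N\in\mathbb{N}$, $T>0$, $\underline t\ge0$ (with $\overline t=\underline t+NT$, $t_k=\underline t+kT$), every dynamically admissible trajectory $\mathbf x_d:[\underline t,\overline t]\to\mathbb{R}^n$ satisfying $\Omega_{\mathbf x_d}(t,\overline w)\subseteq\mathcal X$ for all $t\in[\underline t,\overline t]$, and every collection of points $\overline{\mathbf x}_0,\dots,\overline{\mathbf x}_{N-1}\in\mathcal X$: for every $k\in\{0,\dots,N-1\}$, every $t\in[t_k,t_{k+1})$ and every $\mathbf x\in\Omega_{\mathbf x_d}(t,\overline w)$, $$|k^{\rm fbl}_{\mathbf x_d}(\mathbf x,t)|\le\tfrac12\boldsymbol\sigma_{\mathbf x_d}(t)^\top M_{\alpha,\beta}\boldsymbol\sigma_{\mathbf x_d}(t)+N_{\alpha,\beta}(\overline{\mathbf x}_k)^\top\boldsymbol\sigma_{\mathbf x_d}(t)+\Gamma_{\alpha,\beta}(\overline{\mathbf x}_k),$$ where $\boldsymbol\sigma_{\mathbf x_d}(t)=\big(\|\mathbf x_d(t)-\overline{\mathbf x}_k\|_2,\ |\dot x_d^n(t)-f(\overline{\mathbf x}_k)|\big)^\top$ for $t\in[t_k,t_{k+1})$.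
   Context: System: $\dot{\mathbf x}=\mathbf f(\mathbf x)+\mathbf g(\mathbf x)u+\mathbf w(t)$ with $\mathbf x\in\mathbb{R}^n$, $u\in\mathbb{R}$, $\mathbf f(\mathbf x)=A_0\mathbf x+e_nf(\mathbf x)$, $\mathbf g(\mathbf x)=e_ng(\mathbf x)$, where $A_0=\begin{bmatrix}\mathbf 0&I\\0&\mathbf 0^\top\end{bmatrix}\in\mathbb{R}^{n\times n}$, $e_n$ is the last standard basis vector, and $f,g:\mathbb{R}^n\to\mathbb{R}$ are continuously differentiable with $f(\mathbf 0)=0$, $g(\mathbf x)\ne0$ for all $\mathbf x$. A dynamically admissible trajectory is a piecewise continuously differentiable $\mathbf x_d:[\underline t,\overline t]\to\mathbb{R}^n$ for which there is a piecewise continuous $u_d$ with $\dot{\mathbf x}_d=\mathbf f(\mathbf x_d)+\mathbf g(\mathbf x_d)u_d$ almost everywhere; $\dot x_d^n(t)$ is the $n$-th component of $\dot{\mathbf x}_d(t)$ (at the finitely many nondifferentiability points take the right derivative). $\mathcal X=\{\mathbf x:\mathbf L_j^\top\mathbf x\le\ell_j,\ j=1,\dots,q\}$ is a compact convex polytope with $\mathbf 0$ in its interior. $\mathbf K\in\mathbb{R}^n$ is such that $F=A_0-e_n\mathbf K^\top$ is Hurwitz; $Q\in\mathbb{S}^n_{\succ0}$ and $P\in\mathbb{S}^n_{\succ0}$ is the unique solution of $F^\top P+PF=-Q$; $\gamma=4\lambda_{\max}(P)^3/\lambda_{\min}(Q)^2$; $\overline e=\sqrt{\gamma\overline w^2/\lambda_{\min}(P)}$.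 $\Omega_{\mathbf x_d}(t,\overline w)=\{\mathbf x:(\mathbf x-\mathbf x_d(t))^\top P(\mathbf x-\mathbf x_d(t))\le\gamma\overline w^2\}$. Controller: $k^{\rm fbl}_{\mathbf x_d}(\mathbf x,t)=g(\mathbf x)^{-1}\big(-(f(\mathbf x)-\dot x_d^n(t))-\mathbf K^\top(\mathbf x-\mathbf x_d(t))\big)$. For $\alpha,\beta\ge0$: $M_{\alpha,\beta}=\pi_{\rm PSD}\!\left(\begin{bmatrix}2\alpha\beta&\beta\\\beta&0\end{bmatrix}\right)$, where $\pi_{\rm PSD}$ is the projection of a symmetric matrix onto the positive semidefinite cone (keeping nonnegative eigenvalues, zeroing negative ones); $N_{\alpha,\beta}(\overline{\mathbf x})=\big(2\alpha\beta\overline e+\alpha|g(\overline{\mathbf x})^{-1}|+\beta\|\mathbf K\|_2\overline e,\ |g(\overline{\mathbf x})^{-1}|+\beta\overline e\big)^\top$; $\Gamma_{\alpha,\beta}(\overline{\mathbf x})=\overline e(\beta\overline e+|g(\overline{\mathbf x})^{-1}|)(\alpha+\|\mathbf K\|_2)$. *)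

theory Defs
  imports "HOL-Analysis.Analysis"
begin

text \<open>State space R^n is modelled as real^'n with a finite, linearly ordered index
  type 'n (n = CARD('n) >= 1); the order identifies the components 1..n.\<close>

definition lastidx :: "('n::{finite,linorder})" where
  "lastidx = Max UNIV"

definition e_last :: "real^('n::{finite,linorder})" where
  "e_last = axis lastidx 1"

text \<open>A_0: ones on the superdiagonal (entry (i,j)=1 iff j is the immediate successor of i).\<close>
definition A0 :: "real^(('n::{finite,linorder}))^(('n::{finite,linorder}))" where
  "A0 = (\<chi> i j. if i < j \<and> (\<forall>k. i < k \<longrightarrow> j \<le> k) then 1 else 0)"

definition outer :: "real^'n \<Rightarrow> real^'m \<Rightarrow> real^'m^'n" where
  "outer a b = (\<chi> i j. a$i * b$j)"

definition sys_f :: "(real^('n::{finite,linorder}) \<Rightarrow> real) \<Rightarrow> real^('n::{finite,linorder}) \<Rightarrow> real^('n::{finite,linorder})" where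
  "sys_f f x = A0 *v x + f x *\<^sub>R e_last"

definition sys_g :: "(real^('n::{finite,linorder}) \<Rightarrow> real) \<Rightarrow> real^('n::{finite,linorder}) \<Rightarrow> real^('n::{finite,linorder})" where
  "sys_g g x = g x *\<^sub>R e_last"

definition C1_fun :: "(real^'n \<Rightarrow> real) \<Rightarrow> bool" where
  "C1_fun f \<longleftrightarrow> (\<exists>f'. (\<forall>x. (f has_derivative blinfun_apply (f' x)) (at x)) \<and> continuous_on UNIV f')"

definition hurwitz :: "real^'n^'n \<Rightarrow> bool" where
  "hurwitz F \<longleftrightarrow> (\<forall>(lam::complex) (v::complex^'n). v \<noteq> 0 \<and>
      (\<chi> i j. complex_of_real (F$i$j)) *v v = lam *s v \<longrightarrow> Re lam < 0)"

definition sym_pd :: "real^'n^'n \<Rightarrow> bool" where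
  "sym_pd A \<longleftrightarrow> transpose A = A \<and> (\<forall>x. x \<noteq> 0 \<longrightarrow> 0 < x \<bullet> (A *v x))"

definition real_eigvals :: "real^'n^'n \<Rightarrow> real set" where
  "real_eigvals A = {lam. \<exists>v. v \<noteq> 0 \<and> A *v v = lam *\<^sub>R v}"

definition lambda_max :: "real^'n^'n \<Rightarrow> real" where
  "lambda_max A = Max (real_eigvals A)"

definition lambda_min :: "real^'n^'n \<Rightarrow> real" where
  "lambda_min A = Min (real_eigvals A)"

definition piecewise_continuous_on :: "real \<Rightarrow> real \<Rightarrow> (real \<Rightarrow> real) \<Rightarrow> bool" where
  "piecewise_continuous_on a b u \<longleftrightarrow> (\<exists>D. finite D \<and> continuous_on ({a..b} - D) u \<and>
     (\<forall>d\<in>D. (a < d \<longrightarrow> (\<exists>l. (u \<longlongrightarrow> l) (at_left d))) \<and>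
             (d < b \<longrightarrow> (\<exists>l. (u \<longlongrightarrow> l) (at_right d)))))"

definition dyn_admissible ::
  "(real^('n::{finite,linorder}) \<Rightarrow> real) \<Rightarrow> (real^('n::{finite,linorder}) \<Rightarrow> real) \<Rightarrow> real \<Rightarrow> real \<Rightarrow> (real \<Rightarrow> real^('n::{finite,linorder})) \<Rightarrow> bool" where
  "dyn_admissible f g a b xd \<longleftrightarrow> xd piecewise_C1_differentiable_on {a..b} \<and>
     (\<exists>ud. piecewise_continuous_on a b ud \<and>
        (AE t in lebesgue. t \<in> {a..b} \<longrightarrow>
           (xd has_vector_derivative (sys_f f (xd t) + ud t *\<^sub>R sys_g g (xd t))) (at t)))"

text \<open>n-th component of the derivative of x_d; taken as the right derivative
  (which coincides with the derivative where x_d is differentiable).\<close>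
definition xd_dot_n :: "(real \<Rightarrow> real^('n::{finite,linorder})) \<Rightarrow> real \<Rightarrow> real" where
  "xd_dot_n xd t = (THE v. ((\<lambda>s. xd s $ lastidx) has_real_derivative v) (at_right t))"

definition Omega :: "real^'n^'n \<Rightarrow> real \<Rightarrow> real \<Rightarrow> (real \<Rightarrow> real^'n) \<Rightarrow> real \<Rightarrow> (real^'n) set" where
  "Omega P gam wbar xd t = {x. (x - xd t) \<bullet> (P *v (x - xd t)) \<le> gam * wbar\<^sup>2}"

definition kfbl ::
  "(real^('n::{finite,linorder}) \<Rightarrow> real) \<Rightarrow> (real^('n::{finite,linorder}) \<Rightarrow> real) \<Rightarrow> real^('n::{finite,linorder}) \<Rightarrow> (real \<Rightarrow> real^('n::{finite,linorder})) \<Rightarrow> real^('n::{finite,linorder}) \<Rightarrow> real \<Rightarrow> real" where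
  "kfbl f g K xd x t = inverse (g x) * (- (f x - xd_dot_n xd t) - K \<bullet> (x - xd t))"

definition pi_PSD :: "real^2^2 \<Rightarrow> real^2^2" where
  "pi_PSD A = (SOME B. \<exists>U D. orthogonal_matrix U \<and> (\<forall>i j. i \<noteq> j \<longrightarrow> D$i$j = 0) \<and>
      A = U ** D ** transpose U \<and> B = U ** (\<chi> i j. max (D$i$j) 0) ** transpose U)"

definition M_ab :: "real \<Rightarrow> real \<Rightarrow> real^2^2" where
  "M_ab \<alpha> \<beta> = pi_PSD (vector [vector [2*\<alpha>*\<beta>, \<beta>], vector [\<beta>, 0]])"

definition N_ab :: "(real^'n \<Rightarrow> real) \<Rightarrow> real^'n \<Rightarrow> real \<Rightarrow> real \<Rightarrow> real \<Rightarrow> real^'n \<Rightarrow> real^2" where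
  "N_ab g K ebar \<alpha> \<beta> xb = vector [2*\<alpha>*\<beta>*ebar + \<alpha> * \<bar>inverse (g xb)\<bar> + \<beta> * norm K * ebar,
                                  \<bar>inverse (g xb)\<bar> + \<beta> * ebar]"

definition Gamma_ab :: "(real^'n \<Rightarrow> real) \<Rightarrow> real^'n \<Rightarrow> real \<Rightarrow> real \<Rightarrow> real \<Rightarrow> real^'n \<Rightarrow> real" where
  "Gamma_ab g K ebar \<alpha> \<beta> xb = ebar * (\<beta> * ebar + \<bar>inverse (g xb)\<bar>) * (\<alpha> + norm K)"

definition sigma_vec :: "(real^('n::{finite,linorder}) \<Rightarrow> real) \<Rightarrow> (real \<Rightarrow> real^('n::{finite,linorder})) \<Rightarrow> real^('n::{finite,linorder}) \<Rightarrow> real \<Rightarrow> real^2" where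
  "sigma_vec f xd xb t = vector [norm (xd t - xb), \<bar>xd_dot_n xd t - f xb\<bar>]"

end

theory Submission
  imports Defs
begin

(* On the tube Omega, lambda_min P * |x - x_d(t)|^2 <= (x - x_d(t))' P (x - x_d(t)) <= gamma wbar^2,
   so |x - x_d(t)| <= ebar.  Take the lower bounds for alpha and beta to be Lipschitz constants of
   f and 1/g on the compact convex set X; they exist because f and g are C^1 and g has no zero.
   Writing s1 = |x_d(t) - xb| and s2 = |xd_dot_n(t) - f(xb)|, the triangle inequality gives
   |x - xb| <= ebar + s1, hence
     |1/g(x)| <= |1/g(xb)| + beta (ebar + s1),
     |f(x) - xd_dot_n(t) + K'(x - x_d(t))| <= alpha (ebar + s1) + s2 + |K| ebar,
   and the product of the two right-hand sides is exactly 1/2 sigma' M0 sigma + N' sigma + Gamma,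
   with M0 the matrix before projection.  Projecting onto the PSD cone clips the negative
   eigenvalue of M0 to 0, which can only increase the quadratic form.  Of the closed-loop data only
   P > 0 is used: the Hurwitz gain, the Lyapunov equation, the value of gamma and the admissibility
   of x_d play no role in this bound. *)

lemma symmetric_matrix_inner_commute:
  fixes A :: "real^'n^'n"
  assumes "transpose A = A"
  shows "(A *v x) \<bullet> y = x \<bullet> (A *v y)"
proof -
  have "x \<bullet> (A *v y) = (x v* A) \<bullet> y" by (simp add: dot_lmul_matrix)
  also have "x v* A = A *v x" by (metis assms vector_transpose_matrix)
  finally show ?thesis by simp
qed

lemma quadratic_form_add_scaleR:
  fixes A :: "real^'n^'n"
  assumes "transpose A = A"
  shows "(u + t *\<^sub>R w) \<bullet> (A *v (u + t *\<^sub>R w))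
    = u \<bullet> (A *v u) + 2 * t * (w \<bullet> (A *v u)) + t\<^sup>2 * (w \<bullet> (A *v w))"
proof -
  have "u \<bullet> (A *v w) = w \<bullet> (A *v u)"
    using symmetric_matrix_inner_commute[OF assms, of u w] by (simp add: inner_commute)
  then show ?thesis
    by (simp add: matrix_vector_right_distrib inner_add_left inner_add_right
        matrix_vector_mult_scaleR algebra_simps power2_eq_square)
qed

lemma quadratic_form_min_on_sphere:
  fixes A :: "real^'n^'n"
  shows "\<exists>u. norm u = 1 \<and> (\<forall>v. (u \<bullet> (A *v u)) * (norm v)\<^sup>2 \<le> v \<bullet> (A *v v))"
proof -
  have cont: "continuous_on (sphere 0 1) (\<lambda>v::real^'n. v \<bullet> (A *v v))"
    by (intro continuous_intros continuous_on_id linear_continuous_on)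
      (simp add: bounded_linear_def matrix_vector_mul_linear)
  have "sphere (0::real^'n) 1 \<noteq> {}"
    using vector_choose_size[of 1] by auto
  then obtain u where u: "u \<in> sphere 0 1"
    and umin: "\<forall>y\<in>sphere 0 1. u \<bullet> (A *v u) \<le> y \<bullet> (A *v y)"
    using continuous_attains_inf[OF compact_sphere _ cont] by blast
  have "(u \<bullet> (A *v u)) * (norm v)\<^sup>2 \<le> v \<bullet> (A *v v)" for v
  proof (cases "v = 0")
    case False
    let ?s = "(1 / norm v) *\<^sub>R v"
    have "?s \<in> sphere 0 1" using False by simp
    then have "u \<bullet> (A *v u) \<le> ?s \<bullet> (A *v ?s)" using umin by blast
    also have "?s \<bullet> (A *v ?s) = (v \<bullet> (A *v v)) / (norm v)\<^sup>2"
      by (simp add: matrix_vector_mult_scaleR power2_eq_square)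
    finally show ?thesis using False by (simp add: field_simps)
  qed simp
  then show ?thesis using u by auto
qed

lemma quadratic_form_minimizer_is_eigenvector:
  fixes A :: "real^'n^'n"
  assumes sym: "transpose A = A" and unit: "u \<bullet> u = 1"
    and min: "\<And>v. (u \<bullet> (A *v u)) * (v \<bullet> v) \<le> v \<bullet> (A *v v)"
  shows "A *v u = (u \<bullet> (A *v u)) *\<^sub>R u"
proof -
  define m where "m = u \<bullet> (A *v u)"
  define w where "w = A *v u - m *\<^sub>R u"
  define c where "c = w \<bullet> w"
  define H where "H = w \<bullet> (A *v w) - m * (w \<bullet> w)"
  have H0: "0 \<le> H" using min[of w] by (simp add: H_def m_def)
  \<comment> \<open>moving from u along -w decreases the Rayleigh quotient to first order unless w = 0\<close>
  have first_order: "0 \<le> - 2 * s * c + s\<^sup>2 * H" for s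
  proof -
    define z where "z = u + (-s) *\<^sub>R w"
    have "m * (z \<bullet> z) \<le> m + 2 * (-s) * (w \<bullet> (A *v u)) + s\<^sup>2 * (w \<bullet> (A *v w))"
      using min[of z] quadratic_form_add_scaleR[OF sym, of u "-s" w] by (simp add: z_def m_def)
    moreover have "z \<bullet> z = 1 - 2 * s * (u \<bullet> w) + s\<^sup>2 * (w \<bullet> w)"
      using unit by (simp add: z_def inner_add_left inner_add_right inner_commute
          algebra_simps power2_eq_square)
    moreover have "w \<bullet> (A *v u) = c + m * (u \<bullet> w)"
      by (simp add: c_def w_def inner_diff_left inner_diff_right algebra_simps inner_commute)
    ultimately show ?thesis by (simp add: H_def algebra_simps)
  qed
  have "c \<le> 0"
  proof (rule ccontr)
    assume "\<not> c \<le> 0"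
    define s where "s = c / (H + 1)"
    have "0 < s" and "s * H \<le> c" using \<open>\<not> c \<le> 0\<close> H0 by (auto simp: s_def field_simps)
    then have "s * (- 2 * c + s * H) < 0" using \<open>\<not> c \<le> 0\<close> by (simp add: mult_pos_neg)
    with first_order[of s] show False by (simp add: power2_eq_square algebra_simps)
  qed
  then have "w = 0" unfolding c_def by (metis inner_eq_zero_iff inner_ge_zero order_antisym)
  then show ?thesis by (simp add: w_def m_def)
qed

lemma symmetric_matrix_min_eigenvector:
  fixes A :: "real^'n^'n"
  assumes "transpose A = A"
  shows "\<exists>u. norm u = 1 \<and> A *v u = (u \<bullet> (A *v u)) *\<^sub>R u
    \<and> (\<forall>v. (u \<bullet> (A *v u)) * (norm v)\<^sup>2 \<le> v \<bullet> (A *v v))"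
proof -
  obtain u where u: "norm u = 1" and min: "\<forall>v. (u \<bullet> (A *v u)) * (norm v)\<^sup>2 \<le> v \<bullet> (A *v v)"
    using quadratic_form_min_on_sphere by blast
  have "A *v u = (u \<bullet> (A *v u)) *\<^sub>R u"
    using u min by (intro quadratic_form_minimizer_is_eigenvector assms)
      (auto simp: norm_eq_1 power2_norm_eq_inner)
  then show ?thesis using u min by blast
qed

lemma real_eigvals_pos:
  fixes A :: "real^'n^'n"
  assumes "sym_pd A" "lam \<in> real_eigvals A"
  shows "0 < lam"
proof -
  obtain v where v: "v \<noteq> 0" "A *v v = lam *\<^sub>R v"
    using assms(2) unfolding real_eigvals_def by blast
  have "0 < v \<bullet> (A *v v)" using assms(1) v(1) unfolding sym_pd_def by blast
  then have "0 < lam * (v \<bullet> v)" using v(2) by simp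
  moreover have "0 < v \<bullet> v" using v(1) by simp
  ultimately show ?thesis by (rule zero_less_mult_pos2)
qed

text \<open>Eigenvectors for distinct eigenvalues of a symmetric matrix are orthogonal, hence independent.\<close>

lemma finite_real_eigvals:
  fixes A :: "real^'n^'n"
  assumes sym: "transpose A = A"
  shows "finite (real_eigvals A)"
proof -
  define E where "E = real_eigvals A"
  define ev where "ev lam = (SOME v. v \<noteq> 0 \<and> A *v v = lam *\<^sub>R v)" for lam
  have ev: "ev lam \<noteq> 0 \<and> A *v ev lam = lam *\<^sub>R ev lam" if "lam \<in> E" for lam
  proof -
    have "\<exists>v. v \<noteq> 0 \<and> A *v v = lam *\<^sub>R v" using that unfolding E_def real_eigvals_def by simp
    then show ?thesis unfolding ev_def by (rule someI_ex)
  qed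
  have inj: "inj_on ev E"
  proof (rule inj_onI)
    fix a b assume ab: "a \<in> E" "b \<in> E" "ev a = ev b"
    have "a *\<^sub>R ev a = A *v ev a" using ev[OF ab(1)] by simp
    also have "\<dots> = b *\<^sub>R ev a" using ev[OF ab(2)] ab(3) by simp
    finally have "a *\<^sub>R ev a = b *\<^sub>R ev a" .
    then show "a = b" using ev[OF ab(1)] by (simp only: scaleR_cancel_right) simp
  qed
  have "pairwise orthogonal (ev ` E)"
    unfolding pairwise_def orthogonal_def
  proof (intro ballI impI)
    fix x y assume xy: "x \<in> ev ` E" "y \<in> ev ` E" "x \<noteq> y"
    then obtain a b where ab: "a \<in> E" "b \<in> E" "x = ev a" "y = ev b" "a \<noteq> b" by blast
    have "(A *v x) \<bullet> y = x \<bullet> (A *v y)" by (rule symmetric_matrix_inner_commute[OF sym])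
    then have "a * (x \<bullet> y) = b * (x \<bullet> y)" using ev[OF ab(1)] ev[OF ab(2)] ab(3,4) by simp
    then show "x \<bullet> y = 0" using \<open>a \<noteq> b\<close> by simp
  qed
  moreover have "0 \<notin> ev ` E" using ev by (metis imageE)
  ultimately have "finite (ev ` E)"
    by (intro finiteI_independent pairwise_orthogonal_independent)
  then show ?thesis using finite_imageD inj E_def by blast
qed

lemma lambda_min_symmetric:
  fixes A :: "real^'n^'n"
  assumes sym: "transpose A = A"
  shows lambda_min_in_real_eigvals: "lambda_min A \<in> real_eigvals A"
    and lambda_min_le_quadratic_form: "lambda_min A * (norm v)\<^sup>2 \<le> v \<bullet> (A *v v)"
proof -
  obtain u where u: "norm u = 1" "A *v u = (u \<bullet> (A *v u)) *\<^sub>R u"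
    and min: "\<forall>v. (u \<bullet> (A *v u)) * (norm v)\<^sup>2 \<le> v \<bullet> (A *v v)"
    using symmetric_matrix_min_eigenvector[OF sym] by blast
  have mem: "u \<bullet> (A *v u) \<in> real_eigvals A"
    unfolding real_eigvals_def using u by (auto intro!: exI[of _ u])
  show "lambda_min A \<in> real_eigvals A"
    unfolding lambda_min_def using finite_real_eigvals[OF sym] mem by (intro Min_in) auto
  have "lambda_min A \<le> u \<bullet> (A *v u)"
    unfolding lambda_min_def using finite_real_eigvals[OF sym] mem by simp
  then have "lambda_min A * (norm v)\<^sup>2 \<le> (u \<bullet> (A *v u)) * (norm v)\<^sup>2"
    by (simp add: mult_right_mono)
  then show "lambda_min A * (norm v)\<^sup>2 \<le> v \<bullet> (A *v v)"
    using min order_trans by blast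
qed

lemma lambda_min_pos: "sym_pd A \<Longrightarrow> 0 < lambda_min A"
  by (simp add: real_eigvals_pos lambda_min_in_real_eigvals sym_pd_def)

lemma Omega_norm_le:
  assumes "sym_pd P" "x \<in> Omega P \<gamma> wbar xd t"
  shows "norm (x - xd t) \<le> sqrt (\<gamma> * wbar\<^sup>2 / lambda_min P)"
proof -
  have "transpose P = P" using assms(1) by (simp add: sym_pd_def)
  then have "lambda_min P * (norm (x - xd t))\<^sup>2 \<le> (x - xd t) \<bullet> (P *v (x - xd t))"
    by (rule lambda_min_le_quadratic_form)
  also have "\<dots> \<le> \<gamma> * wbar\<^sup>2" using assms(2) by (simp add: Omega_def)
  finally have "lambda_min P * (norm (x - xd t))\<^sup>2 \<le> \<gamma> * wbar\<^sup>2" .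
  then have "(norm (x - xd t))\<^sup>2 \<le> \<gamma> * wbar\<^sup>2 / lambda_min P"
    using lambda_min_pos[OF assms(1)] by (simp add: field_simps)
  then show ?thesis by (simp add: real_le_rsqrt)
qed

lemma quadratic_form_diagonal:
  fixes D :: "real^'n^'n"
  assumes "\<forall>i j. i \<noteq> j \<longrightarrow> D$i$j = 0"
  shows "y \<bullet> (D *v y) = (\<Sum>i\<in>UNIV. D$i$i * (y$i)\<^sup>2)"
proof -
  have "(D *v y)$i = D$i$i * y$i" for i
  proof -
    have "(D *v y)$i = (\<Sum>j\<in>UNIV. D$i$j * y$j)" by (simp add: matrix_vector_mult_def)
    also have "\<dots> = (\<Sum>j\<in>UNIV. if j = i then D$i$i * y$i else 0)"
      by (rule sum.cong) (use assms in auto)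
    finally show ?thesis by simp
  qed
  then show ?thesis by (simp add: inner_vec_def power2_eq_square algebra_simps)
qed

lemma quadratic_form_conjugate:
  fixes U D :: "real^'n^'n"
  shows "s \<bullet> ((U ** D ** transpose U) *v s) = (transpose U *v s) \<bullet> (D *v (transpose U *v s))"
proof -
  have "(U ** D ** transpose U) *v s = U *v (D *v (transpose U *v s))"
    by (simp only: matrix_vector_mul_assoc matrix_mul_assoc)
  moreover have "s \<bullet> (U *v z) = (transpose U *v s) \<bullet> z" for z
    by (simp only: dot_lmul_matrix[symmetric] transpose_matrix_vector)
  ultimately show ?thesis by simp
qed

lemma quadratic_form_le_clip_negative_eigenvalues:
  fixes U D :: "real^'n^'n"
  assumes diag: "\<forall>i j. i \<noteq> j \<longrightarrow> D$i$j = 0"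
  shows "s \<bullet> ((U ** D ** transpose U) *v s)
    \<le> s \<bullet> ((U ** (\<chi> i j. max (D$i$j) 0) ** transpose U) *v s)"
proof -
  define y where "y = transpose U *v s"
  have diag': "\<forall>i j. i \<noteq> j \<longrightarrow> (\<chi> i j. max (D$i$j) 0 :: real^'n^'n)$i$j = 0"
    using diag by simp
  have "s \<bullet> ((U ** D ** transpose U) *v s) = (\<Sum>i\<in>UNIV. D$i$i * (y$i)\<^sup>2)"
    unfolding quadratic_form_conjugate y_def[symmetric] by (rule quadratic_form_diagonal[OF diag])
  also have "\<dots> \<le> (\<Sum>i\<in>UNIV. max (D$i$i) 0 * (y$i)\<^sup>2)"
    by (intro sum_mono mult_right_mono) auto
  also have "\<dots> = s \<bullet> ((U ** (\<chi> i j. max (D$i$j) 0) ** transpose U) *v s)"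
    unfolding quadratic_form_conjugate y_def[symmetric] quadratic_form_diagonal[OF diag'] by simp
  finally show ?thesis .
qed

text \<open>A unit eigenvector (p, q) for the eigenvalue m gives the rotation U with columns
  (p, q) and (-q, p); the second eigenvalue is then forced to be the trace minus m.\<close>

lemma symmetric_2x2_diagonalization:
  fixes A :: "real^2^2"
  assumes sym: "transpose A = A"
  shows "\<exists>U D. orthogonal_matrix U \<and> (\<forall>i j. i \<noteq> j \<longrightarrow> D$i$j = 0) \<and> A = U ** D ** transpose U"
proof -
  obtain u where nu: "norm u = 1" and eu: "A *v u = (u \<bullet> (A *v u)) *\<^sub>R u"
    using symmetric_matrix_min_eigenvector[OF sym] by blast
  define m where "m = u \<bullet> (A *v u)"
  define p where "p = u$1"
  define q where "q = u$2"
  define a where "a = A$1$1"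
  define b where "b = A$1$2"
  define c where "c = A$2$2"
  have A21: "A$2$1 = b"
  proof -
    have "(transpose A)$1$2 = A$1$2" using sym by simp
    then show ?thesis unfolding b_def by (simp add: transpose_def)
  qed
  have pq: "p*p + q*q = 1"
  proof -
    have "u \<bullet> u = 1" using nu by (simp add: norm_eq_1)
    then show ?thesis by (simp add: inner_vec_def sum_2 p_def q_def)
  qed
  have e1: "a*p + b*q = m*p" using arg_cong[OF eu, of "\<lambda>v. v$1"]
    by (simp add: matrix_vector_mult_def sum_2 a_def b_def p_def q_def m_def)
  have e2: "b*p + c*q = m*q" using arg_cong[OF eu, of "\<lambda>v. v$2"] A21
    by (simp add: matrix_vector_mult_def sum_2 c_def p_def q_def m_def)
  define U :: "real^2^2" where "U = vector [vector [p, -q], vector [q, p]]"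
  define D :: "real^2^2" where "D = vector [vector [m, 0], vector [0, a + c - m]]"
  have "orthogonal_matrix U"
    unfolding orthogonal_matrix_def U_def
    by (simp add: vec_eq_iff forall_2 matrix_matrix_mult_def sum_2 transpose_def mat_def pq
        algebra_simps)
  moreover have "\<forall>i j. i \<noteq> j \<longrightarrow> D$i$j = 0"
    unfolding D_def by (simp add: forall_2)
  moreover have "A = U ** D ** transpose U"
  proof -
    have entries: "a = m*p*p + (a+c-m)*q*q" "b = m*p*q - (a+c-m)*q*p" "c = m*q*q + (a+c-m)*p*p"
      using e1 e2 pq by algebra+
    show ?thesis
      unfolding U_def D_def
      apply (simp add: vec_eq_iff forall_2 matrix_matrix_mult_def sum_2 transpose_def)
      using entries A21 a_def b_def c_def by (simp add: algebra_simps)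
  qed
  ultimately show ?thesis by blast
qed

text \<open>Since pi_PSD is defined by choice, the inequality is proved for every eigendecomposition.\<close>

lemma quadratic_form_le_pi_PSD:
  fixes A :: "real^2^2"
  assumes "transpose A = A"
  shows "s \<bullet> (A *v s) \<le> s \<bullet> (pi_PSD A *v s)"
proof -
  have "\<exists>B U D. orthogonal_matrix U \<and> (\<forall>i j. i \<noteq> j \<longrightarrow> D$i$j = 0) \<and>
      A = U ** D ** transpose U \<and> B = U ** (\<chi> i j. max (D$i$j) 0) ** transpose U"
    using symmetric_2x2_diagonalization[OF assms] by blast
  then obtain U D where "orthogonal_matrix U" and diag: "\<forall>i j. i \<noteq> j \<longrightarrow> D$i$j = 0"
    and "A = U ** D ** transpose U" "pi_PSD A = U ** (\<chi> i j. max (D$i$j) 0) ** transpose U"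
    unfolding pi_PSD_def by (rule someI_ex[THEN exE]) blast
  then show ?thesis using quadratic_form_le_clip_negative_eigenvalues[OF diag, of s U] by simp
qed

lemma C1_fun_lipschitz_on:
  fixes f :: "real^'n \<Rightarrow> real"
  assumes "C1_fun f" "compact X" "convex X"
  shows "\<exists>B. B-lipschitz_on X f"
proof -
  obtain f' where deriv: "\<And>x. (f has_derivative blinfun_apply (f' x)) (at x)"
    and cont: "continuous_on UNIV f'"
    using assms(1) unfolding C1_fun_def by blast
  have "compact (f' ` X)"
    using compact_continuous_image[OF continuous_on_subset[OF cont] assms(2)] by simp
  then obtain b where "0 < b" "\<forall>z\<in>f' ` X. norm z \<le> b"
    using compact_imp_bounded bounded_pos by metis
  then have "b-lipschitz_on X f"
    by (intro bounded_derivative_imp_lipschitz[OF _ assms(3), where f' = "\<lambda>x. blinfun_apply (f' x)"])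
      (auto intro: has_derivative_at_withinI[OF deriv] simp: norm_blinfun.rep_eq[symmetric])
  then show ?thesis ..
qed

lemma inverse_lipschitz_on_abs_ge:
  fixes c :: real
  assumes "0 < c"
  shows "(1 / c\<^sup>2)-lipschitz_on {y. c \<le> \<bar>y\<bar>} inverse"
proof (rule lipschitz_onI)
  fix x y :: real
  assume "x \<in> {y. c \<le> \<bar>y\<bar>}" "y \<in> {y. c \<le> \<bar>y\<bar>}"
  then have cx: "c \<le> \<bar>x\<bar>" and cy: "c \<le> \<bar>y\<bar>" by auto
  then have "x \<noteq> 0" "y \<noteq> 0" using assms by auto
  then have "dist (inverse x) (inverse y) = \<bar>x - y\<bar> / (\<bar>x\<bar> * \<bar>y\<bar>)"
    by (simp add: dist_real_def field_simps abs_mult abs_minus_commute)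
  also have "\<dots> \<le> \<bar>x - y\<bar> / c\<^sup>2"
    using cx cy assms by (intro divide_left_mono) (auto simp: power2_eq_square mult_mono)
  finally show "dist (inverse x) (inverse y) \<le> 1 / c\<^sup>2 * dist x y"
    by (simp add: dist_real_def)
qed simp

lemma C1_fun_inverse_lipschitz_on:
  fixes g :: "real^'n \<Rightarrow> real"
  assumes "C1_fun g" "compact X" "convex X" "\<forall>x. g x \<noteq> 0"
  shows "\<exists>B. B-lipschitz_on X (\<lambda>x. inverse (g x))"
proof (cases "X = {}")
  case False
  obtain L where L: "L-lipschitz_on X g"
    using C1_fun_lipschitz_on[OF assms(1-3)] by blast
  have "continuous_on X (\<lambda>x. \<bar>g x\<bar>)"
    using lipschitz_on_continuous_on[OF L] by (intro continuous_intros)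
  then obtain x0 where "\<forall>y\<in>X. \<bar>g x0\<bar> \<le> \<bar>g y\<bar>"
    using continuous_attains_inf[OF assms(2) False] by blast
  then have "(1 / \<bar>g x0\<bar>\<^sup>2)-lipschitz_on (g ` X) inverse"
    using assms(4) by (intro lipschitz_on_subset[OF inverse_lipschitz_on_abs_ge]) auto
  then show ?thesis using lipschitz_on_compose2[OF L] by blast
qed (auto intro: exI[of _ 0])

lemma kfbl_abs_le_product:
  fixes f g :: "real^('n::{finite,linorder}) \<Rightarrow> real"
  assumes f_lip: "\<alpha>-lipschitz_on X f" and ginv_lip: "\<beta>-lipschitz_on X (\<lambda>x. inverse (g x))"
    and x: "x \<in> X" and xb: "xb \<in> X" and near: "norm (x - xd t) \<le> e"
  shows "\<bar>kfbl f g K xd x t\<bar> \<le> (\<bar>inverse (g xb)\<bar> + \<beta> * (e + norm (xd t - xb)))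
    * (\<alpha> * (e + norm (xd t - xb)) + \<bar>xd_dot_n xd t - f xb\<bar> + norm K * e)"
proof -
  define r where "r = e + norm (xd t - xb)"
  have "0 \<le> e" using near norm_ge_zero order_trans by blast
  then have "0 \<le> r" by (simp add: r_def)
  have "norm (x - xb) \<le> norm (x - xd t) + norm (xd t - xb)"
    using norm_triangle_ineq[of "x - xd t" "xd t - xb"] by simp
  then have dist_xb: "norm (x - xb) \<le> r" using near by (simp add: r_def)
  have "\<bar>inverse (g x) - inverse (g xb)\<bar> \<le> \<beta> * norm (x - xb)"
    using lipschitz_on_normD[OF ginv_lip x xb] by simp
  also have "\<dots> \<le> \<beta> * r" using dist_xb lipschitz_on_nonneg[OF ginv_lip] by (rule mult_left_mono)
  finally have ginv_bound: "\<bar>inverse (g x)\<bar> \<le> \<bar>inverse (g xb)\<bar> + \<beta> * r" by linarith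
  have "\<bar>f x - f xb\<bar> \<le> \<alpha> * norm (x - xb)"
    using lipschitz_on_normD[OF f_lip x xb] by simp
  also have "\<dots> \<le> \<alpha> * r" using dist_xb lipschitz_on_nonneg[OF f_lip] by (rule mult_left_mono)
  finally have f_bound: "\<bar>f x - f xb\<bar> \<le> \<alpha> * r" .
  have "\<bar>K \<bullet> (x - xd t)\<bar> \<le> norm K * norm (x - xd t)" by (rule Cauchy_Schwarz_ineq2)
  also have "\<dots> \<le> norm K * e" using near by (simp add: mult_left_mono)
  finally have "\<bar>- (f x - xd_dot_n xd t) - K \<bullet> (x - xd t)\<bar> \<le> \<alpha> * r + \<bar>xd_dot_n xd t - f xb\<bar> + norm K * e"
    using f_bound by linarith
  then have "\<bar>inverse (g x)\<bar> * \<bar>- (f x - xd_dot_n xd t) - K \<bullet> (x - xd t)\<bar>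
      \<le> (\<bar>inverse (g xb)\<bar> + \<beta> * r) * (\<alpha> * r + \<bar>xd_dot_n xd t - f xb\<bar> + norm K * e)"
    using ginv_bound \<open>0 \<le> r\<close> lipschitz_on_nonneg[OF ginv_lip] by (intro mult_mono) auto
  then show ?thesis by (simp add: kfbl_def abs_mult r_def)
qed

lemma product_eq_quadratic_form_2:
  fixes G e s1 s2 k \<alpha> \<beta> :: real
  shows "(G + \<beta> * (e + s1)) * (\<alpha> * (e + s1) + s2 + k * e)
    = 1/2 * ((vector [s1, s2] :: real^2)
          \<bullet> ((vector [vector [2*\<alpha>*\<beta>, \<beta>], vector [\<beta>, 0]] :: real^2^2) *v vector [s1, s2]))
      + (vector [2*\<alpha>*\<beta>*e + \<alpha> * G + \<beta> * k * e, G + \<beta> * e] :: real^2) \<bullet> vector [s1, s2]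
      + e * (\<beta> * e + G) * (\<alpha> + k)"
  by (simp add: inner_vec_def sum_2 matrix_vector_mult_def algebra_simps power2_eq_square)

lemma kfbl_abs_le_sigma_form:
  fixes f g :: "real^('n::{finite,linorder}) \<Rightarrow> real"
  assumes "\<alpha>-lipschitz_on X f" "\<beta>-lipschitz_on X (\<lambda>x. inverse (g x))"
    and "x \<in> X" "xb \<in> X" "norm (x - xd t) \<le> e"
  shows "\<bar>kfbl f g K xd x t\<bar> \<le>
    1/2 * (sigma_vec f xd xb t \<bullet> (M_ab \<alpha> \<beta> *v sigma_vec f xd xb t))
    + N_ab g K e \<alpha> \<beta> xb \<bullet> sigma_vec f xd xb t + Gamma_ab g K e \<alpha> \<beta> xb"
proof -
  let ?\<sigma> = "sigma_vec f xd xb t"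
  let ?M = "vector [vector [2*\<alpha>*\<beta>, \<beta>], vector [\<beta>, 0]] :: real^2^2"
  have "\<bar>kfbl f g K xd x t\<bar>
      \<le> 1/2 * (?\<sigma> \<bullet> (?M *v ?\<sigma>)) + N_ab g K e \<alpha> \<beta> xb \<bullet> ?\<sigma> + Gamma_ab g K e \<alpha> \<beta> xb"
    using kfbl_abs_le_product[where xd = xd and t = t, OF assms]
    unfolding sigma_vec_def N_ab_def Gamma_ab_def product_eq_quadratic_form_2 .
  moreover have "?\<sigma> \<bullet> (?M *v ?\<sigma>) \<le> ?\<sigma> \<bullet> (M_ab \<alpha> \<beta> *v ?\<sigma>)"
    unfolding M_ab_def by (rule quadratic_form_le_pi_PSD) (simp add: vec_eq_iff forall_2 transpose_def)
  ultimately show ?thesis by linarith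
qed

lemma sample_interval_subset_horizon:
  fixes T tl :: real
  assumes "k < N" "0 \<le> T"
  shows "{tl + real k * T ..< tl + real (Suc k) * T} \<subseteq> {tl..tl + real N * T}"
proof -
  have "real (Suc k) * T \<le> real N * T"
    using assms by (intro mult_right_mono) auto
  moreover have "0 \<le> real k * T" using assms(2) by simp
  ultimately show ?thesis by (auto simp del: of_nat_Suc)
qed

theorem theorem1:
  fixes f g :: "real^('n::{finite,linorder}) \<Rightarrow> real"
    and q :: nat and L :: "nat \<Rightarrow> real^('n::{finite,linorder})" and ell :: "nat \<Rightarrow> real"
    and X :: "(real^('n::{finite,linorder})) set"
    and K :: "real^('n::{finite,linorder})" and Q P :: "real^('n::{finite,linorder})^('n::{finite,linorder})"
    and \<gamma> ebar wbar :: real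
  assumes f_C1: "C1_fun f" and g_C1: "C1_fun g"
    and f0: "f 0 = 0" and g_nz: "\<forall>x. g x \<noteq> 0"
    and X_def: "X = {x. \<forall>j\<in>{1..q}. L j \<bullet> x \<le> ell j}"
    and X_compact: "compact X" and X_int: "0 \<in> interior X"
    and K_hurwitz: "hurwitz (A0 - outer e_last K)"
    and Q_pd: "sym_pd Q" and P_pd: "sym_pd P"
    and lyap: "transpose (A0 - outer e_last K) ** P + P ** (A0 - outer e_last K) = - Q"
    and gamma_def: "\<gamma> = 4 * lambda_max P ^ 3 / lambda_min Q ^ 2"
    and wbar_nn: "0 \<le> wbar"
    and ebar_def: "ebar = sqrt (\<gamma> * wbar\<^sup>2 / lambda_min P)"
  shows "\<exists>\<alpha>l \<beta>l. 0 \<le> \<alpha>l \<and> 0 \<le> \<beta>l \<and>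
    (\<forall>\<alpha> \<beta> (N::nat) T tl (xd :: real \<Rightarrow> real^('n::{finite,linorder})) (xb :: nat \<Rightarrow> real^('n::{finite,linorder})).
       \<alpha>l \<le> \<alpha> \<longrightarrow> \<beta>l \<le> \<beta> \<longrightarrow> 0 < T \<longrightarrow> 0 \<le> tl \<longrightarrow>
       dyn_admissible f g tl (tl + real N * T) xd \<longrightarrow>
       (\<forall>t\<in>{tl..tl + real N * T}. Omega P \<gamma> wbar xd t \<subseteq> X) \<longrightarrow>
       (\<forall>k<N. xb k \<in> X) \<longrightarrow>
       (\<forall>k<N. \<forall>t\<in>{tl + real k * T ..< tl + real (Suc k) * T}. \<forall>x\<in>Omega P \<gamma> wbar xd t.
          \<bar>kfbl f g K xd x t\<bar> \<le>
            1/2 * (sigma_vec f xd (xb k) t \<bullet> (M_ab \<alpha> \<beta> *v sigma_vec f xd (xb k) t))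
            + N_ab g K ebar \<alpha> \<beta> (xb k) \<bullet> sigma_vec f xd (xb k) t
            + Gamma_ab g K ebar \<alpha> \<beta> (xb k)))"
proof -
  have "convex X"
    unfolding X_def by (auto simp: convex_def inner_add_right intro!: convex_bound_le)
  obtain \<alpha>0 where f_lip: "\<alpha>0-lipschitz_on X f"
    using C1_fun_lipschitz_on[OF f_C1 X_compact \<open>convex X\<close>] by blast
  obtain \<beta>0 where ginv_lip: "\<beta>0-lipschitz_on X (\<lambda>x. inverse (g x))"
    using C1_fun_inverse_lipschitz_on[OF g_C1 X_compact \<open>convex X\<close> g_nz] by blast
  show ?thesis
  proof (rule exI[of _ \<alpha>0], rule exI[of _ \<beta>0], intro conjI allI impI ballI
      lipschitz_on_nonneg[OF f_lip] lipschitz_on_nonneg[OF ginv_lip])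
    fix \<alpha> \<beta> T tl t x xd xb and N k :: nat
    assume "\<alpha>0 \<le> \<alpha>" "\<beta>0 \<le> \<beta>" "0 < T" "0 \<le> tl"
      and "dyn_admissible f g tl (tl + real N * T) xd"
      and Omega_X: "\<forall>t\<in>{tl..tl + real N * T}. Omega P \<gamma> wbar xd t \<subseteq> X"
      and xb_X: "\<forall>k<N. xb k \<in> X" and "k < N"
      and t: "t \<in> {tl + real k * T ..< tl + real (Suc k) * T}" and x: "x \<in> Omega P \<gamma> wbar xd t"
    have "t \<in> {tl..tl + real N * T}"
      using sample_interval_subset_horizon[OF \<open>k < N\<close>, of T tl] t \<open>0 < T\<close> by auto
    then have "x \<in> X" using Omega_X x by blast
    moreover have "xb k \<in> X" using xb_X \<open>k < N\<close> by blast
    moreover have "norm (x - xd t) \<le> ebar"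
      using Omega_norm_le[OF P_pd x] ebar_def by simp
    moreover have "\<alpha>-lipschitz_on X f" using f_lip \<open>\<alpha>0 \<le> \<alpha>\<close> by (rule lipschitz_on_le)
    moreover have "\<beta>-lipschitz_on X (\<lambda>x. inverse (g x))"
      using ginv_lip \<open>\<beta>0 \<le> \<beta>\<close> by (rule lipschitz_on_le)
    ultimately show "\<bar>kfbl f g K xd x t\<bar> \<le>
        1/2 * (sigma_vec f xd (xb k) t \<bullet> (M_ab \<alpha> \<beta> *v sigma_vec f xd (xb k) t))
        + N_ab g K ebar \<alpha> \<beta> (xb k) \<bullet> sigma_vec f xd (xb k) t + Gamma_ab g K ebar \<alpha> \<beta> (xb k)"
      by (intro kfbl_abs_le_sigma_form[where xd = xd and t = t])
  qed
qed

end
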